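(* Let $G=(V,E)$ be a $2$-vertex-twinless-connected directed graph. Consider the following algorithm. (1) Compute a minimal $2$-vertex-connected spanning subgraph $G_{2v}=(V,E_{2v})$ of $G$ (i.e. $E_{2v}\subseteq E$, $(V,E_{2v})$ is $2$-vertex-connected, and removing any edge of $E_{2v}$ destroys $2$-vertex-connectivity). (2) Set $E_{2t}\leftarrow E_{2v}$ and $G_{2t}=(V,E_{2t})$. (3) Compute the twinless articulation points of $G_{2v}$. (4) For each twinless articulation point $x$ of $G_{2v}$: while $G_{2t}\setminus\{x\}$ (the graph obtained from the current $G_{2t}$ by deleting $x$) is not twinless strongly connected, compute the twinless strongly connected components of $G_{2t}\setminus\{x\}$, find an edge $(v,w)\in E\setminus E_{2t}$ such that $v,w$ lie in distinct twinless strongly connected components of $G_{2t}\setminus\{x\}$, and add $(v,w)$ to $E_{2t}$. Then the output graph $G_{2t}=(V,E_{2t})$ is $2$-vertex-twinless-connected.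
   Context: Directed graphs are finite. A directed graph is strongly connected if for all vertices $u,w$ there is a directed path from $u$ to $w$. A vertex of a strongly connected graph is a strong articulation point if its deletion leaves a graph that is not strongly connected. A directed graph is $2$-vertex-connected if it is strongly connected, has at least $3$ vertices and has no strong articulation points. Vertices $a,b$ are twinless strongly connected if there exist a directed path $p$ from $a$ to $b$ and a directed path $q$ from $b$ to $a$ such that for every edge $(x,y)$ of $p$, the edge $(y,x)$ is not in $q$; this is an equivalence relation whose classes are the twinless strongly connected components. A graph is twinless strongly connected if it has exactly one twinless strongly connected component. A vertex $v$ of a twinless strongly connected graph $H$ is a twinless articulation point if $H$ minus $v$ is not twinless strongly connected. A directed graph $H=(V,F)$ is $2$-vertex-twinless-connected if it is twinless strongly connected, $|V|\geq 3$, and it has no twinless articulation points. *)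

theory Defs
  imports Main
begin

definition del_vertex :: "'a set \<Rightarrow> ('a \<times> 'a) set \<Rightarrow> 'a \<Rightarrow> 'a set \<times> ('a \<times> 'a) set" where
  "del_vertex V E x = (V - {x}, {(a, b). (a, b) \<in> E \<and> a \<noteq> x \<and> b \<noteq> x})"

definition strongly_connected :: "'a set \<Rightarrow> ('a \<times> 'a) set \<Rightarrow> bool" where
  "strongly_connected V E \<longleftrightarrow> (\<forall>u\<in>V. \<forall>w\<in>V. (u, w) \<in> (E \<inter> (V \<times> V))\<^sup>*)"

definition strong_articulation_point :: "'a set \<Rightarrow> ('a \<times> 'a) set \<Rightarrow> 'a \<Rightarrow> bool" where
  "strong_articulation_point V E v \<longleftrightarrow>
     strongly_connected V E \<and> v \<in> V \<and> \<not> strongly_connected (fst (del_vertex V E v)) (snd (del_vertex V E v))"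

definition two_vertex_connected :: "'a set \<Rightarrow> ('a \<times> 'a) set \<Rightarrow> bool" where
  "two_vertex_connected V E \<longleftrightarrow>
     strongly_connected V E \<and> card V \<ge> 3 \<and> (\<forall>v. \<not> strong_articulation_point V E v)"

definition is_path :: "'a set \<Rightarrow> ('a \<times> 'a) set \<Rightarrow> 'a list \<Rightarrow> 'a \<Rightarrow> 'a \<Rightarrow> bool" where
  "is_path V E p a b \<longleftrightarrow> p \<noteq> [] \<and> hd p = a \<and> last p = b \<and> distinct p \<and> set p \<subseteq> V \<and>
     set (zip p (tl p)) \<subseteq> E"

definition path_edges :: "'a list \<Rightarrow> ('a \<times> 'a) set" where
  "path_edges p = set (zip p (tl p))"

definition twinless_sc :: "'a set \<Rightarrow> ('a \<times> 'a) set \<Rightarrow> 'a \<Rightarrow> 'a \<Rightarrow> bool" where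
  "twinless_sc V E a b \<longleftrightarrow> (\<exists>p q. is_path V E p a b \<and> is_path V E q b a \<and>
      (\<forall>x y. (x, y) \<in> path_edges p \<longrightarrow> (y, x) \<notin> path_edges q))"

definition tsccs :: "'a set \<Rightarrow> ('a \<times> 'a) set \<Rightarrow> 'a set set" where
  "tsccs V E = {{b \<in> V. twinless_sc V E a b} | a. a \<in> V}"

definition twinless_strongly_connected :: "'a set \<Rightarrow> ('a \<times> 'a) set \<Rightarrow> bool" where
  "twinless_strongly_connected V E \<longleftrightarrow> (\<exists>C. tsccs V E = {C})"

definition twinless_articulation_point :: "'a set \<Rightarrow> ('a \<times> 'a) set \<Rightarrow> 'a \<Rightarrow> bool" where
  "twinless_articulation_point V E v \<longleftrightarrow>
     twinless_strongly_connected V E \<and> v \<in> V \<and>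
     \<not> twinless_strongly_connected (fst (del_vertex V E v)) (snd (del_vertex V E v))"

definition two_vertex_twinless_connected :: "'a set \<Rightarrow> ('a \<times> 'a) set \<Rightarrow> bool" where
  "two_vertex_twinless_connected V E \<longleftrightarrow>
     twinless_strongly_connected V E \<and> card V \<ge> 3 \<and> (\<forall>v. \<not> twinless_articulation_point V E v)"

definition minimal_2vc_spanning_subgraph :: "'a set \<Rightarrow> ('a \<times> 'a) set \<Rightarrow> ('a \<times> 'a) set \<Rightarrow> bool" where
  "minimal_2vc_spanning_subgraph V E F \<longleftrightarrow>
     F \<subseteq> E \<and> two_vertex_connected V F \<and> (\<forall>e\<in>F. \<not> two_vertex_connected V (F - {e}))"

text \<open>One step of loop (4) of the algorithm. A state is (list of twinless articulation
  points of G_2v still to be processed, current edge set E_2t). The head x of the list is the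
  articulation point currently processed.\<close>
inductive alg_step :: "'a set \<Rightarrow> ('a \<times> 'a) set \<Rightarrow> 'a list \<times> ('a \<times> 'a) set \<Rightarrow> 'a list \<times> ('a \<times> 'a) set \<Rightarrow> bool"
  for V :: "'a set" and E :: "('a \<times> 'a) set" where
  add_edge: "\<not> twinless_strongly_connected (fst (del_vertex V F x)) (snd (del_vertex V F x))
     \<Longrightarrow> (v, w) \<in> E - F
     \<Longrightarrow> C1 \<in> tsccs (fst (del_vertex V F x)) (snd (del_vertex V F x))
     \<Longrightarrow> C2 \<in> tsccs (fst (del_vertex V F x)) (snd (del_vertex V F x))
     \<Longrightarrow> C1 \<noteq> C2 \<Longrightarrow> v \<in> C1 \<Longrightarrow> w \<in> C2
     \<Longrightarrow> alg_step V E (x # xs, F) (x # xs, insert (v, w) F)"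
| next_point: "twinless_strongly_connected (fst (del_vertex V F x)) (snd (del_vertex V F x))
     \<Longrightarrow> alg_step V E (x # xs, F) (xs, F)"

end

theory Submission
  imports Defs
begin

text \<open>
  Two vertices a, b are twinless strongly connected iff they are strongly connected in some
  twin-free edge set H, i.e. one containing no pair of antiparallel edges: the edges of two
  twinless paths form such an H, and conversely simple paths inside H are twinless. Twin-free
  witnesses can be patched together inside a strong component, which shows that the relation is
  transitive and that adding an edge (v, w) between vertices that are already twinless strongly
  connected does not change it. Hence, if G - x is twinless strongly connected while the current
  graph G_2t - x is not, some edge of G - x missing from G_2t joins two different twinless
  components of G_2t - x, so loop (4) never gets stuck, and it leaves G_2t - x twinless strongly
  connected for every processed x. The remaining vertices are not twinless articulation points
  of G_2v, which is twinless strongly connected because every edge (u, w) of a 2-vertex-connected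
  graph lies on a cycle avoiding (w, u); adding edges preserves both properties.
\<close>

definition twin_free :: "('a \<times> 'a) set \<Rightarrow> bool" where
  "twin_free H \<longleftrightarrow> (\<forall>x y. (x, y) \<in> H \<longrightarrow> (y, x) \<notin> H)"

lemma path_edges_simps [simp]:
  "path_edges [] = {}"
  "path_edges [x] = {}"
  "path_edges (x # y # zs) = insert (x, y) (path_edges (y # zs))"
  by (simp_all add: path_edges_def)

lemma path_edges_subset: "path_edges p \<subseteq> set p \<times> set p"
  by (induction p rule: induct_list012) auto

lemma twin_free_path_edges: "distinct p \<Longrightarrow> twin_free (path_edges p)"
  by (induction p rule: induct_list012) (auto simp: twin_free_def dest: subsetD[OF path_edges_subset])

lemma path_edges_Cons_subset: "path_edges ys \<subseteq> path_edges (x # ys)"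
  by (cases ys) auto

lemma path_edges_rtrancl: "p \<noteq> [] \<Longrightarrow> (hd p, last p) \<in> (path_edges p)\<^sup>*"
proof (induction p rule: induct_list012)
  case (3 x y zs)
  have "(y, last (y # zs)) \<in> (path_edges (y # zs))\<^sup>*"
    using "3.IH"(2) by simp
  then have "(y, last (y # zs)) \<in> (path_edges (x # y # zs))\<^sup>*"
    by (rule subsetD[OF rtrancl_mono[OF path_edges_Cons_subset]])
  then show ?case by (auto intro: converse_rtrancl_into_rtrancl)
qed auto

lemma path_edges_append_subset: "path_edges ys \<subseteq> path_edges (xs @ ys)"
  by (induction xs) (auto dest: subsetD[OF path_edges_Cons_subset])

lemma rtrancl_imp_distinct_path:
  assumes "(a, b) \<in> R\<^sup>*"
  obtains p where "p \<noteq> []" "hd p = a" "last p = b" "distinct p" "path_edges p \<subseteq> R"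
    "set p \<subseteq> insert a (Range R)"
  using assms
proof (induction arbitrary: thesis rule: converse_rtrancl_induct)
  case base
  show ?case by (rule base[of "[b]"]) auto
next
  case (step a a')
  obtain p where p: "p \<noteq> []" "hd p = a'" "last p = b" "distinct p" "path_edges p \<subseteq> R"
    "set p \<subseteq> insert a' (Range R)"
    using step.IH by blast
  have "a' \<in> Range R" using step.hyps(1) by blast
  show ?case
  proof (cases "a \<in> set p")
    case True
    then obtain xs ys where p_split: "p = xs @ a # ys" by (meson split_list)
    show ?thesis
      by (rule step.prems[of "a # ys"])
        (use p p_split path_edges_append_subset[of "a # ys" xs] \<open>a' \<in> Range R\<close> in auto)
  next
    case False
    have "path_edges (a # p) = insert (a, a') (path_edges p)"
      using p(1,2) by (cases p) auto
    then show ?thesis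
      by (intro step.prems[of "a # p"]) (use p False step.hyps(1) \<open>a' \<in> Range R\<close> in auto)
  qed
qed

lemma is_path_iff:
  "is_path V E p a b \<longleftrightarrow>
     p \<noteq> [] \<and> hd p = a \<and> last p = b \<and> distinct p \<and> set p \<subseteq> V \<and> path_edges p \<subseteq> E"
  by (simp add: is_path_def path_edges_def)

lemma twinless_sc_iff:
  "twinless_sc V F a b \<longleftrightarrow> a \<in> V \<and> b \<in> V \<and>
     (\<exists>H \<subseteq> Restr F V. twin_free H \<and> (a, b) \<in> H\<^sup>* \<and> (b, a) \<in> H\<^sup>*)"
  (is "_ \<longleftrightarrow> ?rhs")
proof
  assume "twinless_sc V F a b"
  then obtain p q where p: "is_path V F p a b" and q: "is_path V F q b a"
    and no_twins: "\<forall>x y. (x, y) \<in> path_edges p \<longrightarrow> (y, x) \<notin> path_edges q"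
    unfolding twinless_sc_def by blast
  let ?H = "path_edges p \<union> path_edges q"
  have "?H \<subseteq> Restr F V"
    using p q path_edges_subset[of p] path_edges_subset[of q] by (auto simp: is_path_iff)
  moreover have "twin_free ?H"
    using p q no_twins twin_free_path_edges[of p] twin_free_path_edges[of q]
    by (auto simp: is_path_iff twin_free_def)
  moreover have "(a, b) \<in> ?H\<^sup>*" "(b, a) \<in> ?H\<^sup>*"
    using p q path_edges_rtrancl[of p] path_edges_rtrancl[of q]
      rtrancl_mono[of "path_edges p" ?H] rtrancl_mono[of "path_edges q" ?H]
    by (auto simp: is_path_iff)
  moreover have "a \<in> V" "b \<in> V"
    using p by (auto simp: is_path_iff dest: hd_in_set last_in_set)
  ultimately show ?rhs by blast
next
  assume ?rhs
  then obtain H where ab: "a \<in> V" "b \<in> V" and H: "H \<subseteq> Restr F V" "twin_free H"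
    and reach: "(a, b) \<in> H\<^sup>*" "(b, a) \<in> H\<^sup>*"
    by blast
  obtain p where p: "p \<noteq> []" "hd p = a" "last p = b" "distinct p" "path_edges p \<subseteq> H"
    "set p \<subseteq> insert a (Range H)"
    using rtrancl_imp_distinct_path[OF reach(1)] .
  obtain q where q: "q \<noteq> []" "hd q = b" "last q = a" "distinct q" "path_edges q \<subseteq> H"
    "set q \<subseteq> insert b (Range H)"
    using rtrancl_imp_distinct_path[OF reach(2)] .
  have "Range H \<subseteq> V" using H(1) by blast
  then have "is_path V F p a b" "is_path V F q b a"
    using p q ab H(1) by (auto simp: is_path_iff)
  moreover have "\<forall>x y. (x, y) \<in> path_edges p \<longrightarrow> (y, x) \<notin> path_edges q"
    using p(5) q(5) H(2) by (auto simp: twin_free_def)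
  ultimately show "twinless_sc V F a b"
    unfolding twinless_sc_def by blast
qed

lemma strong_component_strongly_connected:
  fixes K :: "('a \<times> 'a) set" and v :: 'a
  defines "X \<equiv> {u. (v, u) \<in> K\<^sup>* \<and> (u, v) \<in> K\<^sup>*}"
  assumes "x \<in> X" "y \<in> X"
  shows "(x, y) \<in> (Restr K X)\<^sup>*"
proof -
  have "(v, x) \<in> K\<^sup>*" "(y, v) \<in> K\<^sup>*" using assms by (simp_all add: X_def)
  have "(x, y) \<in> K\<^sup>*" using assms by (auto simp: X_def intro: rtrancl_trans)
  then show ?thesis
    using \<open>(v, x) \<in> K\<^sup>*\<close>
  proof (induction rule: converse_rtrancl_induct)
    case (step x x')
    have "(v, x') \<in> K\<^sup>*" using step.prems step.hyps(1) by (rule rtrancl_into_rtrancl)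
    moreover have "(x', v) \<in> K\<^sup>*" using step.hyps(2) \<open>(y, v) \<in> K\<^sup>*\<close> by (rule rtrancl_trans)
    ultimately have "(x, x') \<in> Restr K X"
      using step.prems step.hyps(1) by (auto simp: X_def intro: converse_rtrancl_into_rtrancl)
    then show ?case by (rule converse_rtrancl_into_rtrancl) (rule step.IH[OF \<open>(v, x') \<in> K\<^sup>*\<close>])
  qed simp
qed

text \<open>A twin in the patched set would need one edge inside X \<times> X and one outside.\<close>

lemma twin_free_patch:
  fixes K H :: "('a \<times> 'a) set" and v :: 'a
  defines "X \<equiv> {u. (v, u) \<in> K\<^sup>* \<and> (u, v) \<in> K\<^sup>*}"
  assumes "twin_free K" "twin_free H"
  shows "twin_free (Restr K X \<union> (H - X \<times> X))" and "H\<^sup>* \<subseteq> (Restr K X \<union> (H - X \<times> X))\<^sup>*"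
    and "x \<in> X \<Longrightarrow> y \<in> X \<Longrightarrow> (x, y) \<in> (Restr K X \<union> (H - X \<times> X))\<^sup>*"
proof -
  show "twin_free (Restr K X \<union> (H - X \<times> X))" using assms(2,3) unfolding twin_free_def by blast
  have inside: "(x, y) \<in> (Restr K X \<union> (H - X \<times> X))\<^sup>*" if "x \<in> X" "y \<in> X" for x y
    using strong_component_strongly_connected[where K = K and v = v, folded X_def, OF that]
      rtrancl_mono[of "Restr K X" "Restr K X \<union> (H - X \<times> X)"] by blast
  then show "x \<in> X \<Longrightarrow> y \<in> X \<Longrightarrow> (x, y) \<in> (Restr K X \<union> (H - X \<times> X))\<^sup>*" .
  have "H \<subseteq> (Restr K X \<union> (H - X \<times> X))\<^sup>*" using inside by fastforce
  then show "H\<^sup>* \<subseteq> (Restr K X \<union> (H - X \<times> X))\<^sup>*" by (rule rtrancl_subset_rtrancl)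
qed

lemma twinless_sc_refl: "a \<in> V \<Longrightarrow> twinless_sc V F a a"
  unfolding twinless_sc_iff twin_free_def by blast

lemma twinless_sc_mono: "twinless_sc V F a b \<Longrightarrow> F \<subseteq> F' \<Longrightarrow> twinless_sc V F' a b"
  unfolding twinless_sc_iff by blast

lemma twinless_sc_trans:
  assumes "twinless_sc V F a b" "twinless_sc V F b c"
  shows "twinless_sc V F a c"
proof -
  obtain K where K: "K \<subseteq> Restr F V" "twin_free K" "(a, b) \<in> K\<^sup>*" "(b, a) \<in> K\<^sup>*"
    using assms(1) unfolding twinless_sc_iff by blast
  obtain H where H: "H \<subseteq> Restr F V" "twin_free H" "(b, c) \<in> H\<^sup>*" "(c, b) \<in> H\<^sup>*"
    using assms(2) unfolding twinless_sc_iff by blast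
  define X where "X = {u. (b, u) \<in> K\<^sup>* \<and> (u, b) \<in> K\<^sup>*}"
  define S where "S = Restr K X \<union> (H - X \<times> X)"
  note patch = twin_free_patch[OF K(2) H(2), where v = b, folded X_def S_def]
  have "a \<in> X" "b \<in> X" using K(3,4) by (simp_all add: X_def)
  then have "(a, c) \<in> S\<^sup>*" "(c, a) \<in> S\<^sup>*"
    using patch(2,3) H(3,4) by (meson rtrancl_trans subsetD)+
  moreover have "S \<subseteq> Restr F V" using K(1) H(1) by (auto simp: S_def)
  ultimately show ?thesis
    using assms patch(1) unfolding twinless_sc_iff by blast
qed

lemma twinless_sc_insert_twinless_edge:
  assumes "twinless_sc V F v w"
  shows "twinless_sc V (insert (v, w) F) a b \<longleftrightarrow> twinless_sc V F a b"
proof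
  assume "twinless_sc V (insert (v, w) F) a b"
  then obtain H where ab: "a \<in> V" "b \<in> V" and H: "H \<subseteq> Restr (insert (v, w) F) V" "twin_free H"
    "(a, b) \<in> H\<^sup>*" "(b, a) \<in> H\<^sup>*"
    unfolding twinless_sc_iff by blast
  obtain K where K: "K \<subseteq> Restr F V" "twin_free K" "(v, w) \<in> K\<^sup>*" "(w, v) \<in> K\<^sup>*"
    using assms unfolding twinless_sc_iff by blast
  define X where "X = {u. (v, u) \<in> K\<^sup>* \<and> (u, v) \<in> K\<^sup>*}"
  define S where "S = Restr K X \<union> (H - X \<times> X)"
  note patch = twin_free_patch[OF K(2) H(2), where v = v, folded X_def S_def]
  have "v \<in> X" "w \<in> X" using K(3,4) by (simp_all add: X_def)
  then have "S \<subseteq> Restr F V" using H(1) K(1) by (auto simp: S_def)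
  moreover have "(a, b) \<in> S\<^sup>*" "(b, a) \<in> S\<^sup>*" using patch(2) H(3,4) by auto
  ultimately show "twinless_sc V F a b"
    using ab patch(1) unfolding twinless_sc_iff by blast
qed (rule twinless_sc_mono, auto)

lemma twinless_sc_union_twinless_edges:
  assumes "finite D" "\<forall>(v, w) \<in> D. twinless_sc V F v w"
  shows "twinless_sc V (F \<union> D) a b \<longleftrightarrow> twinless_sc V F a b"
  using assms
proof (induction D rule: finite_induct)
  case (insert e D)
  obtain v w where e: "e = (v, w)" by fastforce
  have "twinless_sc V (F \<union> D) v w"
    using insert.prems e by (auto intro: twinless_sc_mono)
  then show ?case
    using insert.IH insert.prems e twinless_sc_insert_twinless_edge[of V "F \<union> D" v w a b] by simp
qed simp

lemma twinless_strongly_connected_iff: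
  "twinless_strongly_connected V F \<longleftrightarrow> V \<noteq> {} \<and> (\<forall>a\<in>V. \<forall>b\<in>V. twinless_sc V F a b)"
proof
  assume "twinless_strongly_connected V F"
  then obtain C where C: "{{b \<in> V. twinless_sc V F a b} | a. a \<in> V} = {C}"
    unfolding twinless_strongly_connected_def tsccs_def by blast
  have class_eq: "{b \<in> V. twinless_sc V F a b} = C" if "a \<in> V" for a
  proof -
    have "{b \<in> V. twinless_sc V F a b} \<in> {{b \<in> V. twinless_sc V F a b} | a. a \<in> V}"
      using that by blast
    then show ?thesis unfolding C by simp
  qed
  have "twinless_sc V F a b" if "a \<in> V" "b \<in> V" for a b
  proof -
    have "b \<in> {c \<in> V. twinless_sc V F b c}" using that(2) by (simp add: twinless_sc_refl)
    then show ?thesis unfolding class_eq[OF that(2)] class_eq[OF that(1), symmetric] by simp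
  qed
  moreover have "V \<noteq> {}" using C by auto
  ultimately show "V \<noteq> {} \<and> (\<forall>a\<in>V. \<forall>b\<in>V. twinless_sc V F a b)" by blast
next
  assume "V \<noteq> {} \<and> (\<forall>a\<in>V. \<forall>b\<in>V. twinless_sc V F a b)"
  then have "{b \<in> V. twinless_sc V F a b} = V" if "a \<in> V" for a
    using that by blast
  then have "tsccs V F = {V}"
    using \<open>V \<noteq> {} \<and> _\<close> unfolding tsccs_def by blast
  then show "twinless_strongly_connected V F" unfolding twinless_strongly_connected_def ..
qed

lemma twinless_strongly_connected_mono:
  "twinless_strongly_connected V F \<Longrightarrow> F \<subseteq> F' \<Longrightarrow> twinless_strongly_connected V F'"
  unfolding twinless_strongly_connected_iff by (metis twinless_sc_mono)

lemma twinless_strongly_connected_if_edges_inside_components: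
  assumes "twinless_strongly_connected V E" "finite (E - F)"
    and "\<forall>(v, w) \<in> E - F. twinless_sc V F v w"
  shows "twinless_strongly_connected V F"
proof -
  have "twinless_strongly_connected V (F \<union> (E - F))"
    using assms(1) by (rule twinless_strongly_connected_mono) blast
  then show ?thesis
    unfolding twinless_strongly_connected_iff
    using twinless_sc_union_twinless_edges[OF assms(2,3)] by blast
qed

lemma twinless_sc_if_edge_on_cycle:
  assumes "(u, w) \<in> F" "u \<in> V" "w \<in> V" "(w, u) \<in> (Restr F V - {(w, u)})\<^sup>*"
  shows "twinless_sc V F u w"
proof (cases "u = w")
  case True
  then show ?thesis using assms(2) by (simp add: twinless_sc_refl)
next
  case False
  obtain q where q: "q \<noteq> []" "hd q = w" "last q = u" "distinct q"
    and q_edges: "path_edges q \<subseteq> Restr F V - {(w, u)}"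
    using rtrancl_imp_distinct_path[OF assms(4)] by metis
  define H where "H = insert (u, w) (path_edges q)"
  have "H \<subseteq> Restr F V" using assms(1-3) q_edges by (auto simp: H_def)
  moreover have "twin_free H"
    using twin_free_path_edges[OF q(4)] q_edges False by (auto simp: H_def twin_free_def)
  moreover have "(u, w) \<in> H\<^sup>*" by (simp add: H_def r_into_rtrancl)
  moreover have "(w, u) \<in> H\<^sup>*"
    using path_edges_rtrancl[OF q(1)] q(2,3) rtrancl_mono[of "path_edges q" H] by (auto simp: H_def)
  ultimately show ?thesis using assms(2,3) unfolding twinless_sc_iff by blast
qed

lemma two_vertex_connected_rtrancl_avoiding:
  assumes "two_vertex_connected V F" "z \<in> V" "x \<in> V - {z}" "y \<in> V - {z}"
  shows "(x, y) \<in> (Restr F (V - {z}))\<^sup>*"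
proof -
  have "strongly_connected (V - {z}) {(a, b). (a, b) \<in> F \<and> a \<noteq> z \<and> b \<noteq> z}"
    using assms(1,2)
    unfolding two_vertex_connected_def strong_articulation_point_def del_vertex_def by simp
  moreover have "Restr {(a, b). (a, b) \<in> F \<and> a \<noteq> z \<and> b \<noteq> z} (V - {z}) =
      Restr F (V - {z})"
    by blast
  ultimately show ?thesis using assms(3,4) unfolding strongly_connected_def by simp
qed

lemma two_vertex_connected_edge_twinless_sc:
  assumes "two_vertex_connected V F" "(u, w) \<in> F" "u \<in> V" "w \<in> V"
  shows "twinless_sc V F u w"
proof (cases "u = w")
  case True
  then show ?thesis using assms(3) by (simp add: twinless_sc_refl)
next
  case False
  have "\<not> V \<subseteq> {u, w}"
  proof
    assume "V \<subseteq> {u, w}"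
    then have "card V \<le> card {u, w}" by (rule card_mono[rotated]) simp
    also have "\<dots> \<le> 2" by (simp add: card_insert_if)
    finally show False using assms(1) by (simp add: two_vertex_connected_def)
  qed
  then obtain c where c: "c \<in> V" "c \<noteq> u" "c \<noteq> w" by blast
  let ?R = "Restr F V - {(w, u)}"
  have "(w, c) \<in> (Restr F (V - {u}))\<^sup>*"
    using two_vertex_connected_rtrancl_avoiding[OF assms(1,3)] assms(4) c(1) False c(2) by blast
  moreover have "(c, u) \<in> (Restr F (V - {w}))\<^sup>*"
    using two_vertex_connected_rtrancl_avoiding[OF assms(1,4)] assms(3) c(1) False c(3) by blast
  moreover have "Restr F (V - {u}) \<subseteq> ?R" "Restr F (V - {w}) \<subseteq> ?R" by auto
  ultimately have "(w, c) \<in> ?R\<^sup>*" "(c, u) \<in> ?R\<^sup>*"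
    using rtrancl_mono[of "Restr F (V - {u})" ?R] rtrancl_mono[of "Restr F (V - {w})" ?R] by blast+
  then have "(w, u) \<in> ?R\<^sup>*" by (rule rtrancl_trans)
  with assms(2-4) show ?thesis by (rule twinless_sc_if_edge_on_cycle)
qed

lemma two_vertex_connected_imp_twinless_strongly_connected:
  assumes "two_vertex_connected V F"
  shows "twinless_strongly_connected V F"
proof -
  have "twinless_sc V F a b" if "(a, b) \<in> (Restr F V)\<^sup>*" "a \<in> V" for a b
    using that(1)
  proof (induction rule: rtrancl_induct)
    case base
    show ?case using that(2) by (rule twinless_sc_refl)
  next
    case (step b c)
    then have "twinless_sc V F b c" by (auto intro: two_vertex_connected_edge_twinless_sc[OF assms])
    with step.IH show ?case by (rule twinless_sc_trans)
  qed
  moreover have "V \<noteq> {}" "\<forall>a\<in>V. \<forall>b\<in>V. (a, b) \<in> (Restr F V)\<^sup>*"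
    using assms by (auto simp: two_vertex_connected_def strongly_connected_def)
  ultimately show ?thesis unfolding twinless_strongly_connected_iff by blast
qed

abbreviation twinless_strongly_connected_del :: "'a set \<Rightarrow> ('a \<times> 'a) set \<Rightarrow> 'a \<Rightarrow> bool" where
  "twinless_strongly_connected_del V F x \<equiv>
     twinless_strongly_connected (fst (del_vertex V F x)) (snd (del_vertex V F x))"

lemma twinless_strongly_connected_del_mono:
  assumes "twinless_strongly_connected_del V F x" "F \<subseteq> F'"
  shows "twinless_strongly_connected_del V F' x"
  using assms(1) unfolding del_vertex_def fst_conv snd_conv
  by (rule twinless_strongly_connected_mono) (use assms(2) in blast)

lemma not_twinless_articulation_point_mono:
  assumes "\<not> twinless_articulation_point V F v" "twinless_strongly_connected V F" "F \<subseteq> F'"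
  shows "\<not> twinless_articulation_point V F' v"
proof
  assume "twinless_articulation_point V F' v"
  then have "v \<in> V" "\<not> twinless_strongly_connected_del V F' v"
    by (simp_all add: twinless_articulation_point_def)
  moreover have "twinless_strongly_connected_del V F v"
    using assms(1,2) \<open>v \<in> V\<close> by (simp add: twinless_articulation_point_def)
  ultimately show False using twinless_strongly_connected_del_mono[OF _ assms(3)] by blast
qed

lemma alg_step_add_crossing_edge:
  fixes V :: "'a set" and E F :: "('a \<times> 'a) set" and x :: 'a
  defines "V' \<equiv> fst (del_vertex V F x)" and "F' \<equiv> snd (del_vertex V F x)"
  assumes "\<not> twinless_strongly_connected_del V F x" "(v, w) \<in> E - F" "v \<in> V'" "w \<in> V'"
    and "\<not> twinless_sc V' F' v w"
  shows "alg_step V E (x # ys, F) (x # ys, insert (v, w) F)"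
proof -
  let ?C1 = "{b \<in> V'. twinless_sc V' F' v b}" and ?C2 = "{b \<in> V'. twinless_sc V' F' w b}"
  have "?C1 \<in> tsccs V' F'" "?C2 \<in> tsccs V' F'"
    using assms(5,6) unfolding tsccs_def by blast+
  moreover have "v \<in> ?C1" "w \<in> ?C2" "w \<notin> ?C1"
    using assms(5-7) by (simp_all add: twinless_sc_refl)
  ultimately show ?thesis
    using alg_step.add_edge[OF assms(3,4), folded V'_def F'_def] by blast
qed

lemma alg_step_exists:
  assumes "finite V" "E \<subseteq> V \<times> V" "twinless_strongly_connected_del V E x"
  shows "\<exists>s. alg_step V E (x # ys, F) s"
proof (cases "twinless_strongly_connected_del V F x")
  case True
  then show ?thesis by (blast intro: alg_step.next_point)
next
  case False
  define V' Ex Fx where "V' = fst (del_vertex V F x)"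
    and "Ex = snd (del_vertex V E x)" and "Fx = snd (del_vertex V F x)"
  have V': "V' = fst (del_vertex V E x)" by (simp add: V'_def del_vertex_def)
  show ?thesis
  proof (rule ccontr)
    assume no_step: "\<nexists>s. alg_step V E (x # ys, F) s"
    have "twinless_sc V' Fx v w" if "(v, w) \<in> Ex - Fx" for v w
    proof (rule ccontr)
      assume "\<not> twinless_sc V' Fx v w"
      moreover have "(v, w) \<in> E - F" "v \<in> V'" "w \<in> V'"
        using that assms(2) by (auto simp: V'_def Ex_def Fx_def del_vertex_def)
      ultimately show False
        using alg_step_add_crossing_edge[OF False] no_step unfolding V'_def Fx_def by blast
    qed
    moreover have "finite (Ex - Fx)"
      using assms(1,2) finite_subset[of Ex "V \<times> V"] by (auto simp: Ex_def del_vertex_def)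
    ultimately have "twinless_strongly_connected V' Fx"
      using twinless_strongly_connected_if_edges_inside_components assms(3)
      unfolding V' Ex_def by blast
    with False show False unfolding V'_def Fx_def ..
  qed
qed

lemma alg_steps_invariant:
  assumes "(alg_step V E)\<^sup>*\<^sup>* (xs, F0) (ys, F)"
  shows "F0 \<subseteq> F \<and> (\<exists>pre. xs = pre @ ys \<and> (\<forall>x \<in> set pre. twinless_strongly_connected_del V F x))"
  using assms
proof (induction rule: rtranclp_induct2)
  case (step ys F ys' F')
  from step.hyps(2) show ?case
  proof cases
    case add_edge
    then show ?thesis using step.IH by (blast intro: twinless_strongly_connected_del_mono)
  next
    case (next_point x)
    then obtain pre where "xs = (pre @ [x]) @ ys'" "\<forall>y \<in> set (pre @ [x]). twinless_strongly_connected_del V F' y"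
      using step.IH by auto
    then show ?thesis using step.IH next_point by blast
  qed
qed simp

lemma two_vertex_twinless_connected_if_articulation_points_repaired:
  assumes "two_vertex_connected V F0" "F0 \<subseteq> F"
    and "\<forall>x. twinless_articulation_point V F0 x \<longrightarrow> twinless_strongly_connected_del V F x"
  shows "two_vertex_twinless_connected V F"
proof -
  have "twinless_strongly_connected V F0"
    using assms(1) by (rule two_vertex_connected_imp_twinless_strongly_connected)
  then have "\<not> twinless_articulation_point V F v" for v
    using assms(3) not_twinless_articulation_point_mono[OF _ _ assms(2)]
    unfolding twinless_articulation_point_def by blast
  moreover have "twinless_strongly_connected V F"
    using \<open>twinless_strongly_connected V F0\<close> assms(2) by (rule twinless_strongly_connected_mono)
  ultimately show ?thesis
    using assms(1) by (simp add: two_vertex_twinless_connected_def two_vertex_connected_def)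
qed

theorem mainTheorem3:
  fixes V :: "'a set" and E E2v :: "('a \<times> 'a) set" and xs :: "'a list"
  assumes "finite V"
    and "E \<subseteq> V \<times> V"
    and "two_vertex_twinless_connected V E"
    and "minimal_2vc_spanning_subgraph V E E2v"
    and "distinct xs"
    and "set xs = {x. twinless_articulation_point V E2v x}"
  shows "(\<forall>E2t. (alg_step V E)\<^sup>*\<^sup>* (xs, E2v) ([], E2t) \<longrightarrow> two_vertex_twinless_connected V E2t)
       \<and> (\<forall>ys F. (alg_step V E)\<^sup>*\<^sup>* (xs, E2v) (ys, F) \<longrightarrow> ys = [] \<or> (\<exists>s. alg_step V E (ys, F) s))"
proof (intro conjI allI impI)
  fix E2t
  assume "(alg_step V E)\<^sup>*\<^sup>* (xs, E2v) ([], E2t)"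
  then have "E2v \<subseteq> E2t" "\<forall>x \<in> set xs. twinless_strongly_connected_del V E2t x"
    using alg_steps_invariant by fastforce+
  moreover have "two_vertex_connected V E2v"
    using assms(4) by (simp add: minimal_2vc_spanning_subgraph_def)
  ultimately show "two_vertex_twinless_connected V E2t"
    using assms(6) two_vertex_twinless_connected_if_articulation_points_repaired by blast
next
  fix ys F
  assume "(alg_step V E)\<^sup>*\<^sup>* (xs, E2v) (ys, F)"
  then have "set ys \<subseteq> set xs" using alg_steps_invariant by fastforce
  show "ys = [] \<or> (\<exists>s. alg_step V E (ys, F) s)"
  proof (cases ys)
    case (Cons x ys')
    then have "x \<in> V" using \<open>set ys \<subseteq> set xs\<close> assms(6) by (auto simp: twinless_articulation_point_def)
    then have "twinless_strongly_connected_del V E x"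
      using assms(3) by (simp add: two_vertex_twinless_connected_def twinless_articulation_point_def)
    then show ?thesis using alg_step_exists[OF assms(1,2)] Cons by blast
  qed simp
qed

end
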